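(* Let $n,m\ge1$. If $\varphi\colon A\to B$ is a Frobenius $n$-homomorphism and $\gamma\colon A\to B$ is a Frobenius $m$-homomorphism, then $\varphi+\gamma$ is a Frobenius $(n+m)$-homomorphism; moreover $R_{\varphi+\gamma}(a,z)=R_\varphi(a,z)R_\gamma(a,z)$ for all $a\in A$.
   Context: $\mathbb{K}=\mathbb{R}$ or $\mathbb{C}$; $A$ and $B$ are commutative associative unital $\mathbb{K}$-algebras. For a $\mathbb{K}$-linear map $\varphi\colon A\to B$ and $a\in A$, the characteristic function is $R_\varphi(a,z)=\exp\bigl(\varphi(\ln(1+az))\bigr)\in B[[z]]$, with $\ln(1+az)=\sum_{k\ge1}(-1)^{k+1}a^kz^k/k$ and $\varphi$ applied coefficientwise. The Frobenius maps $\Phi_k\colon A^k\to B$ of $\varphi$ are defined by $\Phi_1=\varphi$ and $\Phi_{k+1}(a_1,\dots,a_{k+1})=\varphi(a_1)\Phi_k(a_2,\dots,a_{k+1})-\sum_{j=2}^{k+1}\Phi_k(a_2,\dots,a_{j-1},a_1a_j,a_{j+1},\dots,a_{k+1})$. A linear map $\varphi$ is a (Frobenius) $n$-homomorphism if $\varphi(1)=n\cdot1_B$ and $\Phi_k\equiv0$ for all $k\ge n+1$. *)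

theory Defs
  imports Complex_Main "HOL-Computational_Algebra.Formal_Power_Series"
begin

text \<open>Scalar field: real. Commutative associative unital algebras are modelled by the
  type class combination comm_ring_1 + real_algebra_1; linearity is real linearity.\<close>

text \<open>Frobenius maps: frob phi [a1,...,ak] is Phi_k(a1,...,ak) for k >= 1.
  The value at the empty list is an irrelevant convention (1, consistent with the recursion).\<close>
function frob :: "('a::comm_ring_1 \<Rightarrow> 'b::comm_ring_1) \<Rightarrow> 'a list \<Rightarrow> 'b" where
  "frob \<phi> [] = 1"
| "frob \<phi> [a] = \<phi> a"
| "frob \<phi> (a # b # rest) =
     \<phi> a * frob \<phi> (b # rest)
     - (\<Sum>j<length (b # rest). frob \<phi> ((b # rest)[j := a * (b # rest) ! j]))"
  by pat_completeness auto
termination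
  by (relation "measure (\<lambda>(_, xs). length xs)") (auto split: nat.split)

definition frobenius_hom :: "nat \<Rightarrow> ('a::{comm_ring_1,real_algebra_1} \<Rightarrow> 'b::{comm_ring_1,real_algebra_1}) \<Rightarrow> bool" where
  "frobenius_hom n \<phi> \<longleftrightarrow> linear \<phi> \<and> \<phi> 1 = of_nat n \<and> (\<forall>xs. length xs \<ge> n + 1 \<longrightarrow> frob \<phi> xs = 0)"

definition fps_ln1p :: "'a::{comm_ring_1,real_algebra_1} \<Rightarrow> 'a fps" where
  "fps_ln1p a = Abs_fps (\<lambda>k. if k = 0 then 0 else scaleR ((-1) ^ (k + 1) / real k) (a ^ k))"

text \<open>Exponential of a formal power series with zero constant term, sum_k f^k / k!
  (the sum is finite coefficientwise since f has zero constant term).\<close>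
definition fps_exp_alg :: "'b::{comm_ring_1,real_algebra_1} fps \<Rightarrow> 'b fps" where
  "fps_exp_alg f = Abs_fps (\<lambda>n. \<Sum>k\<le>n. scaleR (1 / fact k) (fps_nth (f ^ k) n))"

definition char_fun :: "('a::{comm_ring_1,real_algebra_1} \<Rightarrow> 'b::{comm_ring_1,real_algebra_1}) \<Rightarrow> 'a \<Rightarrow> 'b fps" where
  "char_fun \<phi> a = fps_exp_alg (Abs_fps (\<lambda>k. \<phi> (fps_nth (fps_ln1p a) k)))"

end

theory Submission
  imports Defs
begin

(* Proof idea.
   (1) Frobenius maps of a sum obey a Leibniz rule: for \<psi> = \<phi> + \<gamma>,
         \<Psi>_k(a_1,...,a_k) = \<Sum> \<Phi>_|l|(l) * \<Gamma>_|r|(r),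
       the sum running over all ways of distributing the arguments (in order)
       into two subsequences l and r.  This is proved by induction on k from the
       defining recursion, using that the correction term "replace a_j by a_1 a_j"
       distributes over the two subsequences.  If k \<ge> n + m + 1 then every
       splitting has |l| \<ge> n + 1 or |r| \<ge> m + 1, so every summand vanishes and
       \<phi> + \<gamma> is an (n+m)-homomorphism.
   (2) The algebraic exponential of formal power series without constant term
       turns sums into products, exp(F + G) = exp F * exp G (binomial theorem plus
       a reindexing of finite double sums).  Since \<phi> is linear, the series
       \<phi>(ln(1 + a z)) is additive in \<phi>, which gives R_{\<phi>+\<gamma>} = R_\<phi> R_\<gamma>. *)

unbundle fps_syntax

lemma frob_cons:
  "frob \<phi> (a # ys) = \<phi> a * frob \<phi> ys - (\<Sum>j<length ys. frob \<phi> (ys[j := a * ys ! j]))"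
  by (cases ys) auto

text \<open>\<open>split_sum F xs\<close> sums \<open>F (l, r)\<close> over all ways of distributing the entries of
  \<open>xs\<close>, keeping their order, into two subsequences \<open>l\<close> and \<open>r\<close> (there are
  \<open>2 ^ length xs\<close> summands).\<close>

fun split_sum :: "('a list \<times> 'a list \<Rightarrow> 'b::comm_ring_1) \<Rightarrow> 'a list \<Rightarrow> 'b" where
  "split_sum F [] = F ([], [])"
| "split_sum F (x # xs) =
     split_sum (\<lambda>p. F (x # fst p, snd p)) xs + split_sum (\<lambda>p. F (fst p, x # snd p)) xs"

lemma split_sum_add: "split_sum (\<lambda>p. F p + G p) xs = split_sum F xs + split_sum G xs"
  by (induction xs arbitrary: F G) (auto simp: algebra_simps)

lemma split_sum_diff: "split_sum (\<lambda>p. F p - G p) xs = split_sum F xs - split_sum G xs"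
  by (induction xs arbitrary: F G) (auto simp: algebra_simps)

lemma split_sum_mult: "split_sum (\<lambda>p. c * F p) xs = c * split_sum F xs"
  by (induction xs arbitrary: F) (auto simp: algebra_simps)

lemma split_sum_eq_0:
  assumes "\<And>l r. length l + length r = length xs \<Longrightarrow> F (l, r) = 0"
  shows "split_sum F xs = 0"
  using assms by (induction xs arbitrary: F) auto

lemma split_sum_update:
  "(\<Sum>j<length ys. split_sum F (ys[j := f (ys ! j)])) =
   split_sum (\<lambda>(l, r). (\<Sum>i<length l. F (l[i := f (l ! i)], r))
                      + (\<Sum>i<length r. F (l, r[i := f (r ! i)]))) ys"
proof (induction ys arbitrary: F)
  case Nil
  then show ?case by simp
next
  case (Cons x xs)
  have "(\<Sum>j<length (x # xs). split_sum F ((x # xs)[j := f ((x # xs) ! j)]))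
      = split_sum F (f x # xs) + (\<Sum>j<length xs. split_sum F (x # xs[j := f (xs ! j)]))"
    by (simp only: length_Cons sum.lessThan_Suc_shift) simp
  then show ?case
    by (simp add: Cons.IH sum.distrib sum.lessThan_Suc_shift split_sum_add case_prod_beta
        algebra_simps del: sum.lessThan_Suc)
qed

text \<open>Leibniz rule for a single new argument: the recursion step for \<open>\<phi> + \<gamma>\<close>,
  applied to the product \<open>\<Phi>(l) \<Gamma>(r)\<close>, gives the two products in which \<open>a\<close> is
  attached to \<open>l\<close> or to \<open>r\<close>.\<close>

lemma frob_cons_product:
  "(\<phi> a + \<gamma> a) * (frob \<phi> l * frob \<gamma> r)
     - ((\<Sum>i<length l. frob \<phi> (l[i := a * l ! i]) * frob \<gamma> r)
        + (\<Sum>i<length r. frob \<phi> l * frob \<gamma> (r[i := a * r ! i])))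
   = frob \<phi> (a # l) * frob \<gamma> r + frob \<phi> l * frob \<gamma> (a # r)"
  by (simp add: frob_cons sum_distrib_left sum_distrib_right algebra_simps del: frob.simps)

lemma frob_add:
  "frob (\<lambda>x. \<phi> x + \<gamma> x) xs = split_sum (\<lambda>(l, r). frob \<phi> l * frob \<gamma> r) xs"
proof (induction "length xs" arbitrary: xs rule: less_induct)
  case less
  show ?case
  proof (cases xs)
    case Nil
    then show ?thesis by simp
  next
    case (Cons a ys)
    let ?G = "\<lambda>(l, r). frob \<phi> l * frob \<gamma> r"
    have "frob (\<lambda>x. \<phi> x + \<gamma> x) xs
        = (\<phi> a + \<gamma> a) * split_sum ?G ys - (\<Sum>j<length ys. split_sum ?G (ys[j := a * ys ! j]))"
      using less Cons by (simp add: frob_cons del: frob.simps)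
    also have "\<dots> = split_sum (\<lambda>(l, r). (\<phi> a + \<gamma> a) * ?G (l, r)
                    - ((\<Sum>i<length l. ?G (l[i := a * l ! i], r))
                       + (\<Sum>i<length r. ?G (l, r[i := a * r ! i])))) ys"
      by (simp add: split_sum_update flip: split_sum_diff split_sum_mult) (simp add: split_def)
    also have "\<dots> = split_sum (\<lambda>(l, r). frob \<phi> (a # l) * frob \<gamma> r
                                      + frob \<phi> l * frob \<gamma> (a # r)) ys"
      by (simp only: prod.case frob_cons_product)
    also have "\<dots> = split_sum ?G xs"
      using Cons by (simp add: split_def flip: split_sum_add)
    finally show ?thesis .
  qed
qed

lemma frobenius_hom_add:
  assumes "frobenius_hom n \<phi>" and "frobenius_hom m \<gamma>"
  shows "frobenius_hom (n + m) (\<lambda>x. \<phi> x + \<gamma> x)"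
  unfolding frobenius_hom_def
proof (intro conjI allI impI)
  show "linear (\<lambda>x. \<phi> x + \<gamma> x)"
    using assms by (intro linear_compose_add) (auto simp: frobenius_hom_def)
  show "\<phi> 1 + \<gamma> 1 = of_nat (n + m)"
    using assms by (simp add: frobenius_hom_def)
  fix xs :: "'a list"
  assume long: "n + m + 1 \<le> length xs"
  show "frob (\<lambda>x. \<phi> x + \<gamma> x) xs = 0"
    unfolding frob_add
  proof (rule split_sum_eq_0)
    fix l r :: "'a list"
    assume "length l + length r = length xs"
    with long have "length l \<ge> n + 1 \<or> length r \<ge> m + 1"
      by linarith
    then show "(case (l, r) of (l, r) \<Rightarrow> frob \<phi> l * frob \<gamma> r) = 0"
      using assms by (auto simp: frobenius_hom_def)
  qed
qed

text \<open>If \<open>f\<close> and \<open>g\<close> have no constant term, then \<open>f ^ k * g ^ l\<close> is divisible by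
  \<open>z ^ (k + l)\<close>; this is what makes all sums below finite.\<close>

lemma fps_pow_mult_pow_nth_eq_0:
  fixes f g :: "'b::comm_ring_1 fps"
  assumes "f $ 0 = 0" and "g $ 0 = 0" and "N < k + l"
  shows "(f ^ k * g ^ l) $ N = 0"
proof -
  have shift: "h = fps_X * fps_shift 1 h" if "h $ 0 = 0" for h :: "'b fps"
    using that by (intro fps_ext) simp
  have "f ^ k * g ^ l = fps_X ^ (k + l) * (fps_shift 1 f ^ k * fps_shift 1 g ^ l)"
    by (subst shift[OF assms(1)], subst shift[OF assms(2)]) (simp add: power_mult_distrib power_add mult_ac)
  then show ?thesis
    using assms(3) by (simp add: fps_X_power_mult_nth)
qed

abbreviation inv_fact :: "nat \<Rightarrow> 'b::real_algebra_1" where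
  "inv_fact k \<equiv> of_real (1 / fact k)"

lemma fps_exp_alg_nth:
  assumes "f $ 0 = 0" and "N \<le> M"
  shows "fps_exp_alg f $ N = (\<Sum>k\<le>M. inv_fact k * (f ^ k) $ N)"
proof -
  have "fps_exp_alg f $ N = (\<Sum>k\<le>N. inv_fact k * (f ^ k) $ N)"
    by (simp add: fps_exp_alg_def scaleR_conv_of_real)
  also have "\<dots> = (\<Sum>k\<le>M. inv_fact k * (f ^ k) $ N)"
    using assms fps_pow_mult_pow_nth_eq_0[of f 0 N _ 0]
    by (intro sum.mono_neutral_left) auto
  finally show ?thesis .
qed

lemma fps_exp_alg_mult_nth:
  fixes F G :: "'b::{comm_ring_1,real_algebra_1} fps"
  assumes F0: "F $ 0 = 0" and G0: "G $ 0 = 0"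
  shows "(fps_exp_alg F * fps_exp_alg G) $ N
       = (\<Sum>(k, l)\<in>{(k, l). k + l \<le> N}. inv_fact k * inv_fact l * (F ^ k * G ^ l) $ N)"
proof -
  let ?t = "\<lambda>k l. inv_fact k * inv_fact l * (F ^ k * G ^ l) $ N"
  have "(fps_exp_alg F * fps_exp_alg G) $ N
     = (\<Sum>i=0..N. (\<Sum>k\<le>N. inv_fact k * (F ^ k) $ i) * (\<Sum>l\<le>N. inv_fact l * (G ^ l) $ (N - i)))"
    unfolding fps_mult_nth
    by (intro sum.cong) (auto simp: fps_exp_alg_nth[OF F0] fps_exp_alg_nth[OF G0 diff_le_self])
  also have "\<dots> = (\<Sum>i=0..N. \<Sum>k\<le>N. \<Sum>l\<le>N. inv_fact k * (F ^ k) $ i * (inv_fact l * (G ^ l) $ (N - i)))"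
    by (simp only: sum_product)
  also have "\<dots> = (\<Sum>k\<le>N. \<Sum>l\<le>N. \<Sum>i=0..N. inv_fact k * (F ^ k) $ i * (inv_fact l * (G ^ l) $ (N - i)))"
    by (subst sum.swap) (simp only: sum.swap[where A = "{0..N}"])
  also have "\<dots> = (\<Sum>k\<le>N. \<Sum>l\<le>N. ?t k l)"
    by (simp add: fps_mult_nth sum_distrib_left mult_ac)
  also have "\<dots> = (\<Sum>(k, l)\<in>{..N} \<times> {..N}. ?t k l)"
    by (simp add: sum.cartesian_product)
  also have "\<dots> = (\<Sum>(k, l)\<in>{(k, l). k + l \<le> N}. ?t k l)"
    using fps_pow_mult_pow_nth_eq_0[OF F0 G0]
    by (intro sum.mono_neutral_right) (auto, metis not_le mult_zero_right)
  finally show ?thesis .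
qed

lemma inv_fact_choose:
  assumes "k \<le> p"
  shows "(inv_fact p :: 'b::real_algebra_1) * of_nat (p choose k) = inv_fact k * inv_fact (p - k)"
proof -
  have "(1 / fact p) * real (p choose k) = (1 / fact k) * (1 / fact (p - k))"
    using binomial_fact[OF assms, where 'a = real] by (simp add: field_simps)
  then show ?thesis
    by (metis of_real_mult of_real_of_nat_eq)
qed

lemma fps_binomial_nth:
  fixes F G :: "'b::{comm_ring_1,real_algebra_1} fps"
  shows "inv_fact p * ((F + G) ^ p) $ N
       = (\<Sum>k\<le>p. inv_fact k * inv_fact (p - k) * (F ^ k * G ^ (p - k)) $ N)"
proof -
  have "inv_fact p * ((F + G) ^ p) $ N
      = (\<Sum>k\<le>p. inv_fact p * of_nat (p choose k) * (F ^ k * G ^ (p - k)) $ N)"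
    unfolding binomial_ring fps_sum_nth sum_distrib_left
    by (intro sum.cong) (simp_all add: fps_of_nat[symmetric] mult.assoc)
  then show ?thesis
    by (simp add: inv_fact_choose)
qed

lemma fps_exp_alg_add:
  fixes F G :: "'b::{comm_ring_1,real_algebra_1} fps"
  assumes F0: "F $ 0 = 0" and G0: "G $ 0 = 0"
  shows "fps_exp_alg (F + G) = fps_exp_alg F * fps_exp_alg G"
proof (rule fps_ext)
  fix N
  have "fps_exp_alg (F + G) $ N = (\<Sum>p\<le>N. inv_fact p * ((F + G) ^ p) $ N)"
    using F0 G0 by (simp add: fps_exp_alg_nth)
  also have "\<dots> = (\<Sum>p\<le>N. \<Sum>k\<le>p. inv_fact k * inv_fact (p - k) * (F ^ k * G ^ (p - k)) $ N)"
    by (simp only: fps_binomial_nth)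
  also have "\<dots> = (\<Sum>(k, l)\<in>{(k, l). k + l \<le> N}. inv_fact k * inv_fact l * (F ^ k * G ^ l) $ N)"
    by (rule sum.triangle_reindex_eq[symmetric])
  also have "\<dots> = (fps_exp_alg F * fps_exp_alg G) $ N"
    by (rule fps_exp_alg_mult_nth[OF F0 G0, symmetric])
  finally show "fps_exp_alg (F + G) $ N = (fps_exp_alg F * fps_exp_alg G) $ N" .
qed

text \<open>For linear maps the characteristic function is multiplicative in the map:
  \<open>(\<phi> + \<gamma>)(ln(1 + a z)) = \<phi>(ln(1 + a z)) + \<gamma>(ln(1 + a z))\<close>, and both summands have
  no constant term since \<open>ln(1 + a z)\<close> has none.\<close>

lemma char_fun_add:
  assumes "linear \<phi>" and "linear \<gamma>"
  shows "char_fun (\<lambda>x. \<phi> x + \<gamma> x) a = char_fun \<phi> a * char_fun \<gamma> a"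
proof -
  let ?F = "Abs_fps (\<lambda>k. \<phi> (fps_ln1p a $ k))" and ?G = "Abs_fps (\<lambda>k. \<gamma> (fps_ln1p a $ k))"
  have ln0: "fps_ln1p a $ 0 = 0"
    by (simp add: fps_ln1p_def)
  have "Abs_fps (\<lambda>k. \<phi> (fps_ln1p a $ k) + \<gamma> (fps_ln1p a $ k)) = ?F + ?G"
    by (rule fps_ext) simp
  moreover have "?F $ 0 = 0" and "?G $ 0 = 0"
    using ln0 linear_0[OF assms(1)] linear_0[OF assms(2)] by simp_all
  ultimately show ?thesis
    unfolding char_fun_def by (simp add: fps_exp_alg_add)
qed

theorem mainTheorem8:
  fixes \<phi> \<gamma> :: "'a::{comm_ring_1,real_algebra_1} \<Rightarrow> 'b::{comm_ring_1,real_algebra_1}"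
    and n m :: nat
  assumes "n \<ge> 1" and "m \<ge> 1"
    and "frobenius_hom n \<phi>" and "frobenius_hom m \<gamma>"
  shows "frobenius_hom (n + m) (\<lambda>x. \<phi> x + \<gamma> x)
         \<and> (\<forall>a. char_fun (\<lambda>x. \<phi> x + \<gamma> x) a = char_fun \<phi> a * char_fun \<gamma> a)"
proof
  show "frobenius_hom (n + m) (\<lambda>x. \<phi> x + \<gamma> x)"
    using assms(3,4) by (rule frobenius_hom_add)
  have "linear \<phi>" and "linear \<gamma>"
    using assms(3,4) by (simp_all add: frobenius_hom_def)
  then show "\<forall>a. char_fun (\<lambda>x. \<phi> x + \<gamma> x) a = char_fun \<phi> a * char_fun \<gamma> a"
    by (simp add: char_fun_add)
qed

end
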